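(* Let $F$ be a DQCNF and let $\varphi,\psi$ be autarkies for $F$. Then the composition $\varphi\circ\psi$, defined on $\mathrm{dom}(\varphi)\cup\mathrm{dom}(\psi)$ by $(\varphi\circ\psi)(y)=\psi(y)$ for $y\in\mathrm{dom}(\psi)$ and $(\varphi\circ\psi)(y)=\varphi(y)$ for $y\in\mathrm{dom}(\varphi)\setminus\mathrm{dom}(\psi)$, is again an autarky for $F$.
   Context: A DQCNF $F$ consists of a set $X$ of universal variables, a set $Y$ of existential variables, a dependency set $D_y\subseteq X$ for each $y\in Y$, and a matrix, a finite set of clauses over $X\cup Y$. An autarky for $F$ is a partial map $\varphi$ from a subset $\mathrm{dom}(\varphi)\subseteq Y$ to Boolean functions, where $\varphi(y)$ depends only on variables in $D_y$, such that every clause $C$ of $F$ either contains no variable of $\mathrm{dom}(\varphi)$ (then $\varphi$ does not touch $C$), or becomes a tautology (identically true as a function of all remaining variables) after substituting $\varphi(y)$ for each $y\in\mathrm{dom}(\varphi)$ occurring in $C$. *)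

theory Defs
  imports Main
begin

text \<open>A literal is a pair (variable, polarity); a clause is a
  set of literals; the matrix is a set of clauses.\<close>

type_synonym 'v lit = "'v \<times> bool"
type_synonym 'v clause = "'v lit set"
type_synonym 'v assignment = "'v \<Rightarrow> bool"
type_synonym 'v boolfun = "'v assignment \<Rightarrow> bool"

definition vars_of :: "'v clause \<Rightarrow> 'v set" where
  "vars_of C = fst ` C"

text \<open>A DQCNF (X, Y, D, F): disjoint sets of universal and existential variables,
  dependency sets D y \<subseteq> X, and a finite matrix of finite clauses over X \<union> Y.\<close>

definition dqcnf :: "'v set \<Rightarrow> 'v set \<Rightarrow> ('v \<Rightarrow> 'v set) \<Rightarrow> 'v clause set \<Rightarrow> bool" where
  "dqcnf X Y D F \<longleftrightarrow> X \<inter> Y = {} \<and> (\<forall>y\<in>Y. D y \<subseteq> X) \<and> finite F \<and>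
     (\<forall>C\<in>F. finite C \<and> vars_of C \<subseteq> X \<union> Y)"

definition depends_only_on :: "'v boolfun \<Rightarrow> 'v set \<Rightarrow> bool" where
  "depends_only_on f S \<longleftrightarrow> (\<forall>a b. (\<forall>x\<in>S. a x = b x) \<longrightarrow> f a = f b)"

definition lit_val_subst :: "('v \<rightharpoonup> 'v boolfun) \<Rightarrow> 'v assignment \<Rightarrow> 'v lit \<Rightarrow> bool" where
  "lit_val_subst \<phi> \<alpha> l = ((case \<phi> (fst l) of Some f \<Rightarrow> f \<alpha> | None \<Rightarrow> \<alpha> (fst l)) = snd l)"

definition autarky :: "'v set \<Rightarrow> 'v set \<Rightarrow> ('v \<Rightarrow> 'v set) \<Rightarrow> 'v clause set
    \<Rightarrow> ('v \<rightharpoonup> 'v boolfun) \<Rightarrow> bool" where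
  "autarky X Y D F \<phi> \<longleftrightarrow>
     dom \<phi> \<subseteq> Y \<and>
     (\<forall>y f. \<phi> y = Some f \<longrightarrow> depends_only_on f (D y)) \<and>
     (\<forall>C\<in>F. vars_of C \<inter> dom \<phi> = {} \<or> (\<forall>\<alpha>. \<exists>l\<in>C. lit_val_subst \<phi> \<alpha> l))"

definition autarky_comp :: "('v \<rightharpoonup> 'v boolfun) \<Rightarrow> ('v \<rightharpoonup> 'v boolfun) \<Rightarrow> ('v \<rightharpoonup> 'v boolfun)" where
  "autarky_comp \<phi> \<psi> = (\<lambda>y. case \<psi> y of Some f \<Rightarrow> Some f | None \<Rightarrow> \<phi> y)"

end

theory Submission
  imports Defs
begin

text \<open>If a clause avoids \<open>dom \<psi>\<close>, then \<open>\<phi> \<circ> \<psi>\<close> acts on it exactly as \<open>\<phi>\<close> does. Otherwise \<open>\<psi>\<close>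
  makes it a tautology, and evaluating \<open>\<phi> \<circ> \<psi>\<close> at \<open>\<alpha>\<close> amounts to evaluating \<open>\<psi>\<close> at the
  assignment \<open>\<beta>\<close> obtained from \<open>\<alpha>\<close> by substituting \<open>\<phi>\<close>: the functions of \<open>\<psi>\<close> read only
  universal variables, on which \<open>\<beta>\<close> and \<open>\<alpha>\<close> agree because \<open>dom \<phi>\<close> is existential.\<close>

definition subst_assign :: "('v \<rightharpoonup> 'v boolfun) \<Rightarrow> 'v assignment \<Rightarrow> 'v assignment" where
  "subst_assign \<phi> \<alpha> = (\<lambda>v. case \<phi> v of Some f \<Rightarrow> f \<alpha> | None \<Rightarrow> \<alpha> v)"

lemma lit_val_subst_eq_subst_assign:
  "lit_val_subst \<phi> \<alpha> l \<longleftrightarrow> subst_assign \<phi> \<alpha> (fst l) = snd l"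
  by (simp add: lit_val_subst_def subst_assign_def)

lemma subst_assign_outside_dom:
  "v \<notin> dom \<phi> \<Longrightarrow> subst_assign \<phi> \<alpha> v = \<alpha> v"
  by (auto simp: subst_assign_def)

lemma dom_autarky_comp: "dom (autarky_comp \<phi> \<psi>) = dom \<phi> \<union> dom \<psi>"
  by (auto simp: autarky_comp_def split: option.splits)

lemma lit_val_subst_autarky_comp_outside:
  "\<psi> (fst l) = None \<Longrightarrow> lit_val_subst (autarky_comp \<phi> \<psi>) \<alpha> l = lit_val_subst \<phi> \<alpha> l"
  by (simp add: lit_val_subst_def autarky_comp_def)

lemma lit_val_subst_autarky_comp:
  assumes "\<And>v f. \<psi> v = Some f \<Longrightarrow> f (subst_assign \<phi> \<alpha>) = f \<alpha>"
  shows "lit_val_subst (autarky_comp \<phi> \<psi>) \<alpha> l = lit_val_subst \<psi> (subst_assign \<phi> \<alpha>) l"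
proof (cases "\<psi> (fst l)")
  case None
  then show ?thesis
    by (simp add: lit_val_subst_eq_subst_assign subst_assign_def autarky_comp_def)
next
  case (Some f)
  then show ?thesis
    using assms[OF Some] by (simp add: lit_val_subst_def autarky_comp_def)
qed

lemma autarky_fun_agree_on_universals:
  assumes "dqcnf X Y D F" "autarky X Y D F \<psi>" "\<psi> y = Some f" "\<forall>x\<in>X. \<beta> x = \<alpha> x"
  shows "f \<beta> = f \<alpha>"
proof -
  have "y \<in> Y" "depends_only_on f (D y)"
    using assms(2,3) by (auto simp: autarky_def)
  moreover have "\<forall>y\<in>Y. D y \<subseteq> X"
    using assms(1) by (simp add: dqcnf_def)
  ultimately show ?thesis
    using assms(4) unfolding depends_only_on_def by blast
qed

lemma subst_assign_agree_on_universals: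
  assumes "dqcnf X Y D F" "autarky X Y D F \<phi>"
  shows "\<forall>x\<in>X. subst_assign \<phi> \<alpha> x = \<alpha> x"
proof -
  have "dom \<phi> \<inter> X = {}"
    using assms by (auto simp: dqcnf_def autarky_def)
  then show ?thesis
    using subst_assign_outside_dom by (metis disjoint_iff)
qed

lemma autarky_comp_satisfies_clause_avoiding_right:
  assumes "vars_of C \<inter> dom \<psi> = {}" "\<forall>\<alpha>. \<exists>l\<in>C. lit_val_subst \<phi> \<alpha> l"
  shows "\<exists>l\<in>C. lit_val_subst (autarky_comp \<phi> \<psi>) \<alpha> l"
proof -
  obtain l where "l \<in> C" "lit_val_subst \<phi> \<alpha> l"
    using assms(2) by blast
  moreover from \<open>l \<in> C\<close> have "\<psi> (fst l) = None"
    using assms(1) by (auto simp: vars_of_def)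
  ultimately show ?thesis
    using lit_val_subst_autarky_comp_outside by metis
qed

lemma autarky_comp_satisfies_clause_of_right:
  assumes "dqcnf X Y D F" "autarky X Y D F \<phi>" "autarky X Y D F \<psi>"
    and "\<forall>\<alpha>. \<exists>l\<in>C. lit_val_subst \<psi> \<alpha> l"
  shows "\<exists>l\<in>C. lit_val_subst (autarky_comp \<phi> \<psi>) \<alpha> l"
proof -
  have "\<And>v f. \<psi> v = Some f \<Longrightarrow> f (subst_assign \<phi> \<alpha>) = f \<alpha>"
    using autarky_fun_agree_on_universals[OF assms(1,3)]
      subst_assign_agree_on_universals[OF assms(1,2)] by blast
  then show ?thesis
    using assms(4) lit_val_subst_autarky_comp by metis
qed

theorem lemma3:
  fixes X Y :: "'v set" and D :: "'v \<Rightarrow> 'v set" and F :: "'v clause set"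
    and \<phi> \<psi> :: "'v \<rightharpoonup> 'v boolfun"
  assumes "dqcnf X Y D F"
    and "autarky X Y D F \<phi>"
    and "autarky X Y D F \<psi>"
  shows "autarky X Y D F (autarky_comp \<phi> \<psi>)"
proof -
  have "dom (autarky_comp \<phi> \<psi>) \<subseteq> Y"
    using assms(2,3) by (auto simp: dom_autarky_comp autarky_def)
  moreover have "\<forall>y f. autarky_comp \<phi> \<psi> y = Some f \<longrightarrow> depends_only_on f (D y)"
    using assms(2,3) by (auto simp: autarky_def autarky_comp_def split: option.splits)
  moreover have "vars_of C \<inter> dom (autarky_comp \<phi> \<psi>) = {} \<or>
      (\<forall>\<alpha>. \<exists>l\<in>C. lit_val_subst (autarky_comp \<phi> \<psi>) \<alpha> l)" if "C \<in> F" for C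
  proof (cases "vars_of C \<inter> dom \<psi> = {}")
    case True
    moreover have "vars_of C \<inter> dom \<phi> = {} \<or> (\<forall>\<alpha>. \<exists>l\<in>C. lit_val_subst \<phi> \<alpha> l)"
      using assms(2) \<open>C \<in> F\<close> by (simp add: autarky_def)
    ultimately show ?thesis
      using autarky_comp_satisfies_clause_avoiding_right[of C \<psi> \<phi>]
      by (auto simp: dom_autarky_comp)
  next
    case False
    then have "\<forall>\<alpha>. \<exists>l\<in>C. lit_val_subst \<psi> \<alpha> l"
      using assms(3) \<open>C \<in> F\<close> unfolding autarky_def by blast
    then show ?thesis
      using autarky_comp_satisfies_clause_of_right[OF assms] by blast
  qed
  ultimately show ?thesis
    by (simp add: autarky_def)
qed

end
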